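(* For each pair $(N,n)\in\{(N,1): N\ge1\}\cup\{(2,2),(3,2),(3,3)\}$ we have $\chi_n(N\times n,2)=2^N$.
   Context: $\mathbb{F}_2^{N\times n}$ is the set of $N\times n$ binary matrices. An exactly $d$-distance coloring is a map $\Gamma:\mathbb{F}_q^{N\times n}\to\{1,\dots,L\}$ such that $\Gamma(M_1)\ne\Gamma(M_2)$ whenever $\mathrm{Rk}(M_1-M_2)=d$ (rank over $\mathbb{F}_q$). $\chi_d(N\times n,q)$ denotes the minimum number $L$ of colors in an exactly $d$-distance coloring. *)

theory Defs
  imports "HOL-Library.Z2" "Jordan_Normal_Form.DL_Rank"
begin

definition mat_rank :: "nat \<Rightarrow> 'a::field mat \<Rightarrow> nat" where
  "mat_rank N A = vec_space.rank N A"

definition exact_dist_coloring ::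
  "'a::field itself \<Rightarrow> nat \<Rightarrow> nat \<Rightarrow> nat \<Rightarrow> nat \<Rightarrow> ('a mat \<Rightarrow> nat) \<Rightarrow> bool" where
  "exact_dist_coloring ty d N n L \<Gamma> \<longleftrightarrow>
     \<Gamma> ` carrier_mat N n \<subseteq> {1..L} \<and>
     (\<forall>M1\<in>carrier_mat N n. \<forall>M2\<in>carrier_mat N n.
        mat_rank N (M1 - M2) = d \<longrightarrow> \<Gamma> M1 \<noteq> \<Gamma> M2)"

definition chi :: "'a::field itself \<Rightarrow> nat \<Rightarrow> nat \<Rightarrow> nat \<Rightarrow> nat" where
  "chi ty d N n = (LEAST L. \<exists>\<Gamma>. exact_dist_coloring ty d N n L \<Gamma>)"

end

theory Submission
  imports Defs Berlekamp_Zassenhaus.Berlekamp_Type_Based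
begin

text \<open>
  Colouring a matrix by its first column is an exactly \<open>n\<close>-distance colouring with \<open>q\<^sup>N\<close>
  colours: a difference of rank \<open>n \<ge> 1\<close> has full column rank, hence a nonzero first column.
  Conversely, if \<open>F\<close> is a linear map from \<open>\<bbbF>\<^sub>q\<^sup>N\<close> to the \<open>N \<times> n\<close> matrices all of whose
  nonzero values have rank \<open>n\<close>, then the \<open>q\<^sup>N\<close> matrices \<open>F a\<close> are pairwise at rank distance \<open>n\<close>
  and need distinct colours. For \<open>n = 1\<close> take \<open>F a = a\<close>; otherwise take the first \<open>n\<close> columns
  \<open>a, x a, \<dots>\<close> of the matrix of multiplication by \<open>a\<close> in \<open>GF(2\<^sup>N)\<close>, which has full column
  rank because a field has no zero divisors.
\<close>

lemma mult_mat_vec_unit_vec: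
  fixes A :: "'a::semiring_1 mat"
  shows "A \<in> carrier_mat nr nc \<Longrightarrow> i < nc \<Longrightarrow> A *\<^sub>v unit_vec nc i = col A i"
  by (rule eq_vecI) auto

lemma carrier_vec_eq_zero_iff: "v \<in> carrier_vec n \<Longrightarrow> v = 0\<^sub>v n \<longleftrightarrow> (\<forall>i<n. v $ i = 0)"
  by auto

lemma mat_mult_vec_eq_zero_iff:
  "v \<in> carrier_vec n \<Longrightarrow>
     mat N n f *\<^sub>v v = 0\<^sub>v N \<longleftrightarrow> (\<forall>i<N. (\<Sum>j<n. f (i, j) * v $ j) = 0)"
  by (auto simp: vec_eq_iff scalar_prod_def atLeast0LessThan)

lemma (in vec_space) rank_less_if_not_distinct_cols:
  assumes A: "A \<in> carrier_mat n nc" and "\<not> distinct (cols A)"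
  shows "rank A < nc"
proof -
  obtain S where S: "maximal S (\<lambda>T. T \<subseteq> set (cols A) \<and> lin_indpt T)"
    using maximal_exists[of "\<lambda>T. T \<subseteq> set (cols A) \<and> lin_indpt T" "card (set (cols A))" "{}"]
    by (meson List.finite_set card_mono empty_iff empty_subsetI finite_lin_indpt2 rev_finite_subset)
  then have "card S \<le> card (set (cols A))"
    by (simp add: card_mono maximal_def)
  also have "\<dots> < nc"
    using A \<open>\<not> distinct (cols A)\<close> card_distinct card_length[of "cols A"]
    by (metis cols_length carrier_matD(2) le_neq_implies_less)
  finally show ?thesis
    using rank_card_indpt[OF A S] by simp
qed

lemma (in vec_space) full_rank_iff_trivial_kernel:
  assumes A: "A \<in> carrier_mat n nc"
  shows "rank A = nc \<longleftrightarrow> (\<forall>v\<in>carrier_vec nc. A *\<^sub>v v = 0\<^sub>v n \<longrightarrow> v = 0\<^sub>v nc)"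
proof
  assume rank: "rank A = nc"
  then have distinct: "distinct (cols A)"
    using rank_less_if_not_distinct_cols[OF A] by fastforce
  then have "lin_indpt (set (cols A))"
    using full_rank_lin_indpt[OF A rank] by blast
  then show "\<forall>v\<in>carrier_vec nc. A *\<^sub>v v = 0\<^sub>v n \<longrightarrow> v = 0\<^sub>v nc"
    using lin_depI[OF A _ _ _ distinct] by blast
next
  assume kernel: "\<forall>v\<in>carrier_vec nc. A *\<^sub>v v = 0\<^sub>v n \<longrightarrow> v = 0\<^sub>v nc"
  have distinct: "distinct (cols A)"
  proof (rule ccontr)
    assume "\<not> distinct (cols A)"
    then obtain i j where ij: "i \<noteq> j" "i < nc" "j < nc" "col A i = col A j"
      using A by (auto simp: distinct_conv_nth)
    let ?v = "unit_vec nc i - unit_vec nc j :: 'a vec"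
    have "A *\<^sub>v ?v = 0\<^sub>v n"
      using A ij by (simp add: mult_minus_distrib_mat_vec mult_mat_vec_unit_vec)
    moreover have "?v $ i \<noteq> 0"
      using ij by simp
    ultimately show False
      using kernel ij(2) by fastforce
  qed
  have "lin_indpt (set (cols A))"
    using lin_depE[OF A _ distinct] kernel by metis
  then show "rank A = nc"
    using lin_indpt_full_rank[OF A distinct] by blast
qed

lemma mat_rank_eq_iff_trivial_kernel:
  "A \<in> carrier_mat N n \<Longrightarrow>
     mat_rank N A = n \<longleftrightarrow> (\<forall>v\<in>carrier_vec n. A *\<^sub>v v = 0\<^sub>v N \<longrightarrow> v = 0\<^sub>v n)"
  unfolding mat_rank_def by (rule vec_space.full_rank_iff_trivial_kernel)

lemma exact_dist_coloring_card_le: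
  fixes S :: "'a::field mat set"
  assumes coloring: "exact_dist_coloring TYPE('a) d N n L \<Gamma>"
    and S: "S \<subseteq> carrier_mat N n"
    and dist: "\<And>M1 M2. M1 \<in> S \<Longrightarrow> M2 \<in> S \<Longrightarrow> M1 \<noteq> M2 \<Longrightarrow> mat_rank N (M1 - M2) = d"
  shows "card S \<le> L"
proof -
  have "inj_on \<Gamma> S"
    using coloring S dist unfolding exact_dist_coloring_def inj_on_def by blast
  moreover have "\<Gamma> ` S \<subseteq> {1..L}"
    using coloring S unfolding exact_dist_coloring_def by blast
  ultimately show ?thesis
    using card_inj_on_le[of \<Gamma> S "{1..L}"] by simp
qed

lemma first_column_coloring:
  assumes "0 < n"
  shows "\<exists>\<Gamma>. exact_dist_coloring TYPE('a::{field,finite}) n N n (CARD('a) ^ N) \<Gamma>"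
proof -
  obtain f :: "'a vec \<Rightarrow> nat" where f: "bij_betw f (carrier_vec N) {0..<CARD('a) ^ N}"
    using ex_bij_betw_finite_nat[of "carrier_vec N :: 'a vec set"] by (auto simp: card_carrier_vec)
  define \<Gamma> where "\<Gamma> M = f (col M 0) + 1" for M :: "'a mat"
  have col_carrier: "col M 0 \<in> carrier_vec N" if "M \<in> carrier_mat N n" for M :: "'a mat"
    using that \<open>0 < n\<close> by simp
  have "exact_dist_coloring TYPE('a) n N n (CARD('a) ^ N) \<Gamma>"
    unfolding exact_dist_coloring_def
  proof (intro conjI ballI impI)
    show "\<Gamma> ` carrier_mat N n \<subseteq> {1..CARD('a) ^ N}"
      using col_carrier bij_betwE[OF f] by (fastforce simp: \<Gamma>_def)
  next
    fix M1 M2 :: "'a mat"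
    assume M: "M1 \<in> carrier_mat N n" "M2 \<in> carrier_mat N n" and rank: "mat_rank N (M1 - M2) = n"
    have "M1 - M2 \<in> carrier_mat N n"
      using M(2) by (rule minus_carrier_mat)
    then have "\<forall>v\<in>carrier_vec n. (M1 - M2) *\<^sub>v v = 0\<^sub>v N \<longrightarrow> v = 0\<^sub>v n"
      using rank mat_rank_eq_iff_trivial_kernel by blast
    then have "(M1 - M2) *\<^sub>v unit_vec n 0 \<noteq> 0\<^sub>v N"
      using \<open>0 < n\<close> by auto
    then have "col M1 0 - col M2 0 \<noteq> 0\<^sub>v N"
      using M \<open>0 < n\<close> by (simp add: minus_mult_distrib_mat_vec mult_mat_vec_unit_vec)
    then have "col M1 0 \<noteq> col M2 0"
      using M col_carrier by auto
    then show "\<Gamma> M1 \<noteq> \<Gamma> M2"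
      using f M col_carrier by (auto simp: \<Gamma>_def bij_betw_def inj_on_def)
  qed
  then show ?thesis
    by blast
qed

definition full_rank_code :: "nat \<Rightarrow> nat \<Rightarrow> ('a::field vec \<Rightarrow> 'a mat) \<Rightarrow> bool" where
  "full_rank_code N n F \<longleftrightarrow>
     (\<forall>a\<in>carrier_vec N. F a \<in> carrier_mat N n) \<and>
     (\<forall>a\<in>carrier_vec N. \<forall>b\<in>carrier_vec N. F (a - b) = F a - F b) \<and>
     (\<forall>a\<in>carrier_vec N. a \<noteq> 0\<^sub>v N \<longrightarrow> mat_rank N (F a) = n)"

lemma full_rank_code_rank_diff:
  fixes F :: "'a::field vec \<Rightarrow> 'a mat"
  assumes F: "full_rank_code N n F"
    and a: "a \<in> carrier_vec N" and b: "b \<in> carrier_vec N" and "a \<noteq> b"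
  shows "mat_rank N (F a - F b) = n"
proof -
  have "a - b \<noteq> 0\<^sub>v N"
    using a b \<open>a \<noteq> b\<close> by (metis vec_eq_iff index_minus_vec carrier_vecD index_zero_vec right_minus_eq)
  moreover have "a - b \<in> carrier_vec N"
    using a b by simp
  ultimately have "mat_rank N (F (a - b)) = n"
    using F unfolding full_rank_code_def by blast
  then show ?thesis
    using F a b unfolding full_rank_code_def by metis
qed

lemma full_rank_code_inj_on:
  fixes F :: "'a::field vec \<Rightarrow> 'a mat"
  assumes "0 < n" and F: "full_rank_code N n F"
  shows "inj_on F (carrier_vec N)"
proof (rule inj_onI, rule ccontr)
  fix a b
  assume a: "a \<in> carrier_vec N" and b: "b \<in> carrier_vec N" and "F a = F b" "a \<noteq> b"
  have "F a - F b = 0\<^sub>m N n"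
    using F b \<open>F a = F b\<close> unfolding full_rank_code_def by simp
  then have "mat_rank N (0\<^sub>m N n :: 'a mat) = n"
    using full_rank_code_rank_diff[OF F a b \<open>a \<noteq> b\<close>] by simp
  then show False
    using \<open>0 < n\<close> by (simp add: mat_rank_def vec_space.rank_0I)
qed

lemma full_rank_code_card_le_colors:
  fixes F :: "'a::{field,finite} vec \<Rightarrow> 'a mat"
  assumes "0 < n" and F: "full_rank_code N n F"
    and coloring: "exact_dist_coloring TYPE('a) n N n L \<Gamma>"
  shows "CARD('a) ^ N \<le> L"
proof -
  have "card (F ` carrier_vec N) \<le> L"
  proof (rule exact_dist_coloring_card_le[OF coloring])
    show "F ` carrier_vec N \<subseteq> carrier_mat N n"
      using F unfolding full_rank_code_def by auto
    show "mat_rank N (M1 - M2) = n"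
      if "M1 \<in> F ` carrier_vec N" "M2 \<in> F ` carrier_vec N" "M1 \<noteq> M2" for M1 M2
      using that full_rank_code_rank_diff[OF F] by blast
  qed
  moreover have "card (F ` carrier_vec N) = CARD('a) ^ N"
    using full_rank_code_inj_on[OF \<open>0 < n\<close> F] by (simp add: card_image card_carrier_vec)
  ultimately show ?thesis
    by simp
qed

lemma chi_eq_card_power_if_full_rank_code:
  fixes F :: "'a::{field,finite} vec \<Rightarrow> 'a mat"
  assumes "0 < n" and "full_rank_code N n F"
  shows "chi TYPE('a) n N n = CARD('a) ^ N"
  unfolding chi_def
proof (rule Least_equality)
  show "\<exists>\<Gamma>. exact_dist_coloring TYPE('a) n N n (CARD('a) ^ N) \<Gamma>"
    using first_column_coloring[OF \<open>0 < n\<close>] .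
  show "CARD('a) ^ N \<le> L" if "\<exists>\<Gamma>. exact_dist_coloring TYPE('a) n N n L \<Gamma>" for L
    using that full_rank_code_card_le_colors[OF assms] by blast
qed

lemma column_full_rank_code: "full_rank_code N 1 (\<lambda>a. mat_of_cols N [a :: 'a::field vec])"
  unfolding full_rank_code_def
proof (intro conjI ballI impI)
  fix a b :: "'a vec"
  assume "a \<in> carrier_vec N" "b \<in> carrier_vec N"
  then show "mat_of_cols N [a - b] = mat_of_cols N [a] - mat_of_cols N [b]"
    by (intro eq_matI) (auto simp: mat_of_cols_def)
next
  fix a :: "'a vec"
  assume a: "a \<in> carrier_vec N" "a \<noteq> 0\<^sub>v N"
  then obtain i where i: "i < N" "a $ i \<noteq> 0"
    by (auto simp: carrier_vec_eq_zero_iff)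
  have "v = 0\<^sub>v 1" if v: "v \<in> carrier_vec 1" "mat_of_cols N [a] *\<^sub>v v = 0\<^sub>v N" for v
  proof -
    have "v $ 0 = 0"
      using v i by (auto simp: mat_of_cols_def mat_mult_vec_eq_zero_iff)
    then show ?thesis
      using v by (simp add: carrier_vec_eq_zero_iff)
  qed
  then show "mat_rank N (mat_of_cols N [a]) = 1"
    by (subst mat_rank_eq_iff_trivial_kernel) auto
qed (simp add: mat_of_cols_def)

lemma UNIV_bit: "(UNIV :: bit set) = {0, 1}"
  using bit.exhaust by auto

instance bit :: finite
  by standard (simp add: UNIV_bit)

lemma CARD_bit [simp]: "CARD(bit) = 2"
  by (simp add: UNIV_bit)

text \<open>Keep bit arithmetic in ring form, so that \<open>ac_simps\<close> can normalise matrix entries.\<close>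
declare add_bit_eq_xor [simp del] mult_bit_eq_and [simp del]

lemma gf4_no_zero_divisors:
  fixes a0 a1 v0 v1 :: bit
  assumes "a0 \<noteq> 0 \<or> a1 \<noteq> 0"
    and "a0 * v0 + a1 * v1 = 0"
    and "a1 * v0 + (a0 + a1) * v1 = 0"
  shows "v0 = 0 \<and> v1 = 0"
  using assms by (cases a0; cases a1; cases v0; cases v1) simp_all

lemma gf8_no_zero_divisors:
  fixes a0 a1 a2 v0 v1 v2 :: bit
  assumes "a0 \<noteq> 0 \<or> a1 \<noteq> 0 \<or> a2 \<noteq> 0"
    and "a0 * v0 + a2 * v1 + a1 * v2 = 0"
    and "a1 * v0 + (a0 + a2) * v1 + (a1 + a2) * v2 = 0"
    and "a2 * v0 + a1 * v1 + (a0 + a2) * v2 = 0"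
  shows "v0 = 0 \<and> v1 = 0 \<and> v2 = 0"
  using assms by (cases a0; cases a1; cases a2; cases v0; cases v1; cases v2) simp_all

text \<open>The columns are \<open>a\<close> and \<open>x a\<close> for \<open>a = a\<^sub>0 + a\<^sub>1 x\<close> in \<open>\<bbbF>\<^sub>4 = \<bbbF>\<^sub>2[x]/(x\<^sup>2 + x + 1)\<close>.\<close>
definition gf4_mult_mat :: "bit vec \<Rightarrow> bit mat" where
  "gf4_mult_mat a = mat_of_rows_list 2 [[a$0, a$1], [a$1, a$0 + a$1]]"

text \<open>The first \<open>n\<close> of the columns \<open>a, x a, x\<^sup>2 a\<close> for \<open>a = a\<^sub>0 + a\<^sub>1 x + a\<^sub>2 x\<^sup>2\<close> in
  \<open>\<bbbF>\<^sub>8 = \<bbbF>\<^sub>2[x]/(x\<^sup>3 + x + 1)\<close>.\<close>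
definition gf8_mult_mat :: "nat \<Rightarrow> bit vec \<Rightarrow> bit mat" where
  "gf8_mult_mat n a =
     mat_of_rows_list n [[a$0, a$2, a$1], [a$1, a$0 + a$2, a$1 + a$2], [a$2, a$1, a$0 + a$2]]"

lemma gf4_mult_mat_full_rank_code: "full_rank_code 2 2 gf4_mult_mat"
  unfolding full_rank_code_def
proof (intro conjI ballI impI)
  fix a b :: "bit vec"
  assume ab: "a \<in> carrier_vec 2" "b \<in> carrier_vec 2"
  show "gf4_mult_mat (a - b) = gf4_mult_mat a - gf4_mult_mat b"
  proof (rule eq_matI)
    fix i j
    assume "i < dim_row (gf4_mult_mat a - gf4_mult_mat b)" "j < dim_col (gf4_mult_mat a - gf4_mult_mat b)"
    then have "i < 2" "j < 2"
      by (simp_all add: gf4_mult_mat_def mat_of_rows_list_def)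
    then show "gf4_mult_mat (a - b) $$ (i, j) = (gf4_mult_mat a - gf4_mult_mat b) $$ (i, j)"
      using ab by (auto simp: gf4_mult_mat_def mat_of_rows_list_def numeral_eq_Suc less_Suc_eq ac_simps)
  qed (simp_all add: gf4_mult_mat_def mat_of_rows_list_def)
next
  fix a :: "bit vec"
  assume a: "a \<in> carrier_vec 2" "a \<noteq> 0\<^sub>v 2"
  have "v = 0\<^sub>v 2" if v: "v \<in> carrier_vec 2" "gf4_mult_mat a *\<^sub>v v = 0\<^sub>v 2" for v
    using a v gf4_no_zero_divisors[of "a$0" "a$1" "v$0" "v$1"]
    by (simp add: gf4_mult_mat_def mat_of_rows_list_def mat_mult_vec_eq_zero_iff
        carrier_vec_eq_zero_iff numeral_eq_Suc lessThan_Suc All_less_Suc ac_simps)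
  then show "mat_rank 2 (gf4_mult_mat a) = 2"
    by (subst mat_rank_eq_iff_trivial_kernel) (auto simp: gf4_mult_mat_def mat_of_rows_list_dim)
qed (intro carrier_matI, simp_all add: gf4_mult_mat_def mat_of_rows_list_dim)

lemma gf8_mult_mat_full_rank_code:
  assumes "n \<le> 3"
  shows "full_rank_code 3 n (gf8_mult_mat n)"
  unfolding full_rank_code_def
proof (intro conjI ballI impI)
  fix a b :: "bit vec"
  assume ab: "a \<in> carrier_vec 3" "b \<in> carrier_vec 3"
  show "gf8_mult_mat n (a - b) = gf8_mult_mat n a - gf8_mult_mat n b"
  proof (rule eq_matI)
    fix i j
    assume "i < dim_row (gf8_mult_mat n a - gf8_mult_mat n b)" "j < dim_col (gf8_mult_mat n a - gf8_mult_mat n b)"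
    then have "i < 3" "j < n" "j < 3"
      using assms by (simp_all add: gf8_mult_mat_def mat_of_rows_list_def)
    then show "gf8_mult_mat n (a - b) $$ (i, j) = (gf8_mult_mat n a - gf8_mult_mat n b) $$ (i, j)"
      using ab by (auto simp: gf8_mult_mat_def mat_of_rows_list_def numeral_eq_Suc less_Suc_eq ac_simps)
  qed (simp_all add: gf8_mult_mat_def mat_of_rows_list_def)
next
  fix a :: "bit vec"
  assume a: "a \<in> carrier_vec 3" "a \<noteq> 0\<^sub>v 3"
  have "v = 0\<^sub>v n" if v: "v \<in> carrier_vec n" "gf8_mult_mat n a *\<^sub>v v = 0\<^sub>v 3" for v
  proof -
    txt \<open>Padding \<open>v\<close> with zeros lets one identity in \<open>\<bbbF>\<^sub>8\<close> cover every \<open>n \<le> 3\<close>.\<close>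
    let ?w = "\<lambda>j. if j < n then v $ j else 0"
    have "n = 0 \<or> n = 1 \<or> n = 2 \<or> n = 3"
      using assms by auto
    then have "\<forall>j<n. v $ j = 0"
      using a v gf8_no_zero_divisors[of "a$0" "a$1" "a$2" "?w 0" "?w 1" "?w 2"]
      by (elim disjE) (simp_all add: gf8_mult_mat_def mat_of_rows_list_def mat_mult_vec_eq_zero_iff
          carrier_vec_eq_zero_iff numeral_eq_Suc lessThan_Suc All_less_Suc ac_simps)
    then show ?thesis
      using v by (simp add: carrier_vec_eq_zero_iff)
  qed
  then show "mat_rank 3 (gf8_mult_mat n a) = n"
    by (subst mat_rank_eq_iff_trivial_kernel) (auto simp: gf8_mult_mat_def mat_of_rows_list_dim)
qed (intro carrier_matI, simp_all add: gf8_mult_mat_def mat_of_rows_list_dim)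

theorem proposition4p2:
  fixes N n :: nat
  assumes "(N \<ge> 1 \<and> n = 1) \<or> (N, n) \<in> {(2, 2), (3, 2), (3, 3)}"
  shows "chi TYPE(bit) n N n = 2 ^ N"
proof -
  consider "n = 1" | "N = 2" "n = 2" | "N = 3" "n \<in> {2, 3}"
    using assms by auto
  then show ?thesis
  proof cases
    case 1
    then show ?thesis
      using chi_eq_card_power_if_full_rank_code[OF _ column_full_rank_code[where 'a = bit]] by simp
  next
    case 2
    then show ?thesis
      using chi_eq_card_power_if_full_rank_code[OF _ gf4_mult_mat_full_rank_code] by simp
  next
    case 3
    then show ?thesis
      using chi_eq_card_power_if_full_rank_code[OF _ gf8_mult_mat_full_rank_code] by auto
  qed
qed

end
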